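(* Let $k\ge 3$ and let $p>3$ be a prime dividing $2k+1$. Then every root (in an algebraic closure of $\mathbb{F}_p$) of the reduction of $Q_{k-1}(q)$ modulo $p$, and hence of $P_{k-1}(q)$ modulo $p$, has multiplicity at most $4$. Consequently, for every $a\in\mathbb{F}_p$, $(x-a)^5$ does not divide $p_{k-1}(x)$ in $\mathbb{F}_p[x]$; in particular the exponents $n_a$ in any factorization $m_{k-1}(x)\equiv x\prod_{a\neq0}(x-a)^{n_a}\pmod p$ satisfy $n_a\le 4$.
   Context: $Q_{k-1}(q)=q^{4k+4}-q^{4k+3}-q^{4k+2}-q^{4k+1}+q^3+q^2+q-1=(q^4-1)P_{k-1}(q)$ with $P_{k-1}(q)=1+\sum_{l=1}^{k} q^{4l-4}(q^4-q^3-q^2-q)$. $p_{k-1}(x)$ is the polynomial with $P_{k-1}(q)=q^{2k}p_{k-1}(q+q^{-1})$ (given by $p_0=x^2-x-3$, $p_1=(x^3-2x^2-3x+5)(x+1)$, $p_k=(x^2-2)p_{k-1}-p_{k-2}$), and $m_{k-1}$ is $p_{k-1}$ if $k\not\equiv2\pmod3$ and $p_{k-1}/(x+1)$ if $k\equiv2\pmod 3$. *)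

theory Defs
  imports "HOL-Computational_Algebra.Computational_Algebra" "Berlekamp_Zassenhaus.Finite_Field"
begin

text \<open>Qpoly k is Q_{k-1}(q) = q^(4k+4) - q^(4k+3) - q^(4k+2) - q^(4k+1) + q^3 + q^2 + q - 1.\<close>
definition Qpoly :: "nat \<Rightarrow> int poly" where
  "Qpoly k = Polynomial.monom 1 (4*k+4) - Polynomial.monom 1 (4*k+3) - Polynomial.monom 1 (4*k+2) - Polynomial.monom 1 (4*k+1)
             + Polynomial.monom 1 3 + Polynomial.monom 1 2 + Polynomial.monom 1 1 - 1"

text \<open>Ppoly k is P_{k-1}(q) = 1 + sum_{l=1}^k q^(4l-4) (q^4 - q^3 - q^2 - q).\<close>
definition Ppoly :: "nat \<Rightarrow> int poly" where
  "Ppoly k = 1 + (\<Sum>l=1..k. Polynomial.monom 1 (4*l-4) * [:0, -1, -1, -1, 1:])"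

fun psmall :: "nat \<Rightarrow> int poly" where
  "psmall 0 = [:-3, -1, 1:]"
| "psmall (Suc 0) = [:5, -3, -2, 1:] * [:1, 1:]"
| "psmall (Suc (Suc n)) = [:-2, 0, 1:] * psmall (Suc n) - psmall n"

definition msmall :: "nat \<Rightarrow> int poly" where
  "msmall k = (if k mod 3 = 2 then psmall (k-1) div [:1, 1:] else psmall (k-1))"

end

theory Submission
  imports Defs
begin

(*
  Throughout, F is a field in which 4k+2 = 0 and 24 <> 0; these are exactly the consequences
  of "char F = p with p > 3 prime and p | 2k+1" that the argument needs (char_conditions).

  1. Multiplying Q_{k-1} by q gives q^(4k+2)(q^3-q^2-q-1) + (q^4+q^3+q^2-q).  The derivative
     of q^(4k+2) vanishes in F, so the fourth derivative of this polynomial is the nonzero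
     constant 24.  As u^(m+n) | f implies u^m | f^(n), no nonconstant u satisfies
     u^5 | Q_{k-1}; since Q_{k-1} = (q^4-1) P_{k-1}, the same holds for P_{k-1}.  In
     particular no root of either polynomial has multiplicity above 4.
  2. In every field, P_{k-1}(X) = X^(2k) p_{k-1}(X + 1/X) for X <> 0.  Evaluating at the
     variable q of the fraction field F(q) and clearing denominators shows that a factor
     (x-a)^5 of p_{k-1} would give the factor (q^2-aq+1)^5 of P_{k-1}, contradicting 1.
  3. m_{k-1} divides p_{k-1}, so the exponents of any factorization of m_{k-1} into linear
     factors are at most 4.
  The main theorem combines these three parts.
*)

lemma Ppoly_0: "Ppoly 0 = 1"
  by (simp add: Ppoly_def)

lemma Ppoly_Suc: "Ppoly (Suc k) = Ppoly k + [:0, 1:]^(4*k) * [:0, -1, -1, -1, 1:]"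
  unfolding Ppoly_def by (simp add: monom_altdef)

lemma Ppoly_rec: "Ppoly (Suc (Suc n)) = (1 + [:0, 1:]^4) * Ppoly (Suc n) - [:0, 1:]^4 * Ppoly n"
proof -
  have "4 * Suc n = 4 + 4 * n" by simp
  then show ?thesis unfolding Ppoly_Suc by (simp add: algebra_simps power_add)
qed

lemma Qpoly_eq: "Qpoly k = [:0, 1:]^(4*k) * [:0, -1, -1, -1, 1:] + [:-1, 1, 1, 1:]"
proof -
  define x :: "int poly" where "x = [:0, 1:]"
  define y where "y = x^(4*k)"
  have "Qpoly k = y*x^4 - y*x^3 - y*x^2 - y*x + x^3 + x^2 + x - 1"
    unfolding Qpoly_def monom_altdef x_def[symmetric] y_def by (simp add: power_add power2_eq_square)
  also have "\<dots> = y * (x^4 - x^3 - x^2 - x) + (x^3 + x^2 + x - 1)"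
    by (simp add: algebra_simps)
  also have "\<dots> = [:0, 1:]^(4*k) * [:0, -1, -1, -1, 1:] + [:-1, 1, 1, 1:]"
    by (simp add: x_def y_def numeral_eq_Suc one_pCons)
  finally show ?thesis .
qed

text \<open>The factorisation Q_{k-1} = (q^4 - 1) P_{k-1}: passing from k to k+1, both sides grow
  by (q^4 - 1) q^(4k) (q^4 - q^3 - q^2 - q).\<close>

lemma Qpoly_Ppoly: "Qpoly k = [:-1, 0, 0, 0, 1:] * Ppoly k"
proof (induction k)
  case 0
  show ?case by (simp add: Qpoly_eq Ppoly_0)
next
  case (Suc k)
  define D :: "int poly" where "D = [:0, -1, -1, -1, 1:]"
  have x4: "[:0, 1:]^(4 * Suc k) = [:0, 1:]^4 * [:0, 1:]^(4*k)" and
    factor: "[:-1, 0, 0, 0, 1:] = [:0, 1:]^4 - (1 :: int poly)"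
    by (simp_all add: power_add numeral_eq_Suc one_pCons)
  have "Qpoly (Suc k) = Qpoly k + [:-1, 0, 0, 0, 1:] * ([:0, 1:]^(4*k) * D)"
    unfolding Qpoly_eq x4 factor D_def by (simp add: algebra_simps)
  also have "\<dots> = [:-1, 0, 0, 0, 1:] * Ppoly (Suc k)"
    unfolding Suc.IH Ppoly_Suc D_def by (simp add: algebra_simps)
  finally show ?case .
qed

text \<open>q Q_{k-1} = q^(4k+2)(q^3 - q^2 - q - 1) + (q^4 + q^3 + q^2 - q): the only
  high-degree part of q Q_{k-1} is a multiple of the monomial q^(4k+2).\<close>

lemma Qpoly_shift:
  "[:0, 1:] * Qpoly k = Polynomial.monom 1 (4*k+2) * [:-1, -1, -1, 1:] + [:0, -1, 1, 1, 1:]"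
proof -
  have "[:0, -1, -1, -1, 1:] = [:0, 1:] * [:-1, -1, -1, (1::int):]"
    and "[:0, 1:] * [:-1, 1, 1, 1:] = [:0, -1, 1, 1, (1::int):]"
    and "Polynomial.monom (1::int) (4*k+2) = [:0, 1:] * ([:0, 1:] * [:0, 1:]^(4*k))"
    by (simp_all add: monom_altdef power_add power2_eq_square)
  then show ?thesis unfolding Qpoly_eq by (simp only: distrib_left mult_ac)
qed

lemma power_dvd_pderiv:
  fixes u F :: "'a::idom poly"
  assumes "u ^ Suc n dvd F"
  shows "u ^ n dvd pderiv F"
proof -
  obtain G where G: "F = u ^ Suc n * G" using assms by blast
  have "pderiv F = u ^ n * (Polynomial.smult (of_nat (Suc n)) (pderiv u * G) + u * pderiv G)"
    unfolding G pderiv_mult pderiv_power_Suc by (simp add: algebra_simps)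
  then show ?thesis by simp
qed

lemma power_dvd_higher_pderiv:
  fixes u F :: "'a::idom poly"
  assumes "u ^ (m + n) dvd F"
  shows "u ^ m dvd (pderiv ^^ n) F"
  using assms
proof (induction n arbitrary: F)
  case (Suc n)
  have "u ^ (m + n) dvd pderiv F"
    using Suc.prems by (intro power_dvd_pderiv) simp
  then show ?case using Suc.IH by (simp add: funpow_Suc_right del: funpow.simps)
qed simp

lemma pderiv_monom_mult_char:
  fixes F :: "'a::idom poly"
  assumes "of_nat m = (0::'a)"
  shows "pderiv (Polynomial.monom 1 m * F) = Polynomial.monom 1 m * pderiv F"
  using assms by (simp add: pderiv_mult pderiv_monom)

lemma fourth_pderiv_Qpoly_shift:
  assumes "of_nat m = (0::'a::idom)"
  shows "(pderiv ^^ 4) (Polynomial.monom 1 m * [:-1, -1, -1, 1:] + [:0, -1, 1, 1, 1:]) = [:24::'a:]"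
proof -
  have "(pderiv ^^ 4) F = pderiv (pderiv (pderiv (pderiv F)))" for F :: "'a poly"
    by (simp add: numeral_eq_Suc)
  then show ?thesis
    by (simp only: pderiv_add pderiv_monom_mult_char[OF assms]) (simp add: pderiv_pCons)
qed

text \<open>If u^5 divides Q_{k-1}, then u divides 24, so u is constant.\<close>

lemma Qpoly_no_fifth_power_factor:
  fixes u :: "'a::field poly"
  assumes char: "of_nat (4*k+2) = (0::'a)" and "(24::'a) \<noteq> 0"
    and dvd: "u ^ 5 dvd of_int_poly (Qpoly k)"
  shows "degree u = 0"
proof -
  have "of_int_poly ([:0, 1:] * Qpoly k)
          = Polynomial.monom (1::'a) (4*k+2) * [:-1, -1, -1, 1:] + [:0, -1, 1, 1, 1:]"
    unfolding Qpoly_shift by (simp only: hom_distribs) (simp add: map_poly_monom)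
  moreover have "u ^ 5 dvd of_int_poly ([:0, 1:] * Qpoly k)"
    unfolding of_int_poly_hom.hom_mult using dvd by (rule dvd_mult)
  ultimately have "u ^ 1 dvd (pderiv ^^ 4) (Polynomial.monom (1::'a) (4*k+2) * [:-1, -1, -1, 1:] + [:0, -1, 1, 1, 1:])"
    by (intro power_dvd_higher_pderiv) simp
  then have "u dvd [:24:]" unfolding fourth_pderiv_Qpoly_shift[OF char] by simp
  then show ?thesis using assms(2) divides_degree by fastforce
qed

lemma Ppoly_no_fifth_power_factor:
  fixes u :: "'a::field poly"
  assumes "of_nat (4*k+2) = (0::'a)" and "(24::'a) \<noteq> 0"
    and dvd: "u ^ 5 dvd of_int_poly (Ppoly k)"
  shows "degree u = 0"
proof (rule Qpoly_no_fifth_power_factor[OF assms(1,2)])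
  show "u ^ 5 dvd of_int_poly (Qpoly k)"
    unfolding Qpoly_Ppoly of_int_poly_hom.hom_mult using dvd by (rule dvd_mult)
qed

lemma order_le_if_not_power_dvd:
  fixes p :: "'a::idom poly"
  assumes "\<not> [:-a, 1:] ^ Suc n dvd p"
  shows "Polynomial.order a p \<le> n"
  using assms order_1 power_le_dvd not_less_eq_eq by blast

lemma root_multiplicities_le_4:
  fixes x :: "'a::field"
  assumes "of_nat (4*k+2) = (0::'a)" and "(24::'a) \<noteq> 0"
  shows "Polynomial.order x (of_int_poly (Qpoly k)) \<le> 4"
    and "Polynomial.order x (of_int_poly (Ppoly k)) \<le> 4"
  using Qpoly_no_fifth_power_factor[OF assms, of "[:-x, 1:]"]
    Ppoly_no_fifth_power_factor[OF assms, of "[:-x, 1:]"]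
  by (auto intro!: order_le_if_not_power_dvd simp: eval_nat_numeral)

lemma Ppoly_1_eval: "poly (of_int_poly (Ppoly (Suc 0))) (X::'a::field) = 1 + X^4 - X^3 - X^2 - X"
  by (simp add: Ppoly_def of_int_poly_hom.hom_add algebra_simps power2_eq_square power3_eq_cube power4_eq_xxxx)

lemma Ppoly_rec_eval:
  "poly (of_int_poly (Ppoly (Suc (Suc n)))) (X::'a::field)
     = (1 + X^4) * poly (of_int_poly (Ppoly (Suc n))) X - X^4 * poly (of_int_poly (Ppoly n)) X"
  unfolding Ppoly_rec
  by (simp add: of_int_poly_hom.hom_minus of_int_poly_hom.hom_mult of_int_poly_hom.hom_add of_int_poly_hom.hom_power)

lemma psmall_rec_eval:
  "poly (of_int_poly (psmall (Suc (Suc n)))) (Z::'a::field)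
     = (Z^2 - 2) * poly (of_int_poly (psmall (Suc n))) Z - poly (of_int_poly (psmall n)) Z"
proof -
  have "poly (of_int_poly [:-2, 0, 1:]) Z = Z^2 - 2"
    by (simp add: power2_eq_square)
  then show ?thesis
    by (simp only: psmall.simps(3) of_int_poly_hom.hom_minus of_int_poly_hom.hom_mult
        poly_mult poly_diff)
qed

text \<open>P_n(X) = X^(2n+2) p_n(X + 1/X) for every nonzero X of any field: both sides satisfy
  the same recursion, because X^2 ((X + 1/X)^2 - 2) = 1 + X^4.\<close>

lemma Ppoly_psmall_eval:
  fixes X :: "'a::field"
  assumes X: "X \<noteq> 0"
  shows "poly (of_int_poly (Ppoly (Suc n))) X
           = X^(2*n+2) * poly (of_int_poly (psmall n)) ((1 + X^2) / X)"
proof (induction n rule: psmall.induct)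
  case 1
  show ?case using X
    by (simp add: Ppoly_1_eval field_simps power2_eq_square power3_eq_cube power4_eq_xxxx)
next
  case 2
  show ?case using X unfolding Ppoly_rec_eval
    by (simp add: Ppoly_1_eval Ppoly_0 of_int_poly_hom.hom_mult field_simps power2_eq_square power3_eq_cube power4_eq_xxxx)
next
  case (3 n)
  define Z where "Z = (1 + X^2) / X"
  define t where "t = X^(2*n+2)"
  have XZ: "1 + X^4 = X^2 * (Z^2 - 2)"
    using X by (simp add: Z_def field_simps power2_eq_square power4_eq_xxxx)
  have pow: "X^(2 * Suc n + 2) = t * X^2" "X^(2 * Suc (Suc n) + 2) = t * X^4"
  proof -
    have "2 * Suc n + 2 = (2*n+2) + 2" "2 * Suc (Suc n) + 2 = (2*n+2) + 4" by simp_all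
    then show "X^(2 * Suc n + 2) = t * X^2" "X^(2 * Suc (Suc n) + 2) = t * X^4"
      unfolding t_def by (simp_all only: power_add)
  qed
  have "poly (of_int_poly (Ppoly (Suc (Suc (Suc n))))) X
          = X^2 * (Z^2 - 2) * (t * X^2 * poly (of_int_poly (psmall (Suc n))) Z)
            - X^4 * (t * poly (of_int_poly (psmall n)) Z)"
    unfolding Ppoly_rec_eval[of "Suc n"] 3 pow(1) XZ Z_def t_def ..
  also have "\<dots> = t * X^4 * ((Z^2 - 2) * poly (of_int_poly (psmall (Suc n))) Z - poly (of_int_poly (psmall n)) Z)"
    by (simp add: algebra_simps power2_eq_square power4_eq_xxxx)
  also have "\<dots> = X^(2 * Suc (Suc n) + 2) * poly (of_int_poly (psmall (Suc (Suc n)))) Z"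
    unfolding pow(2) psmall_rec_eval ..
  finally show ?case unfolding Z_def .
qed

definition const_fract :: "'a::field \<Rightarrow> 'a poly fract" where
  "const_fract c = to_fract [:c:]"

interpretation const_fract: comm_ring_hom "const_fract :: 'a::field \<Rightarrow> 'a poly fract"
  by unfold_locales (simp_all add: const_fract_def flip: one_pCons to_fract_add to_fract_mult)

interpretation const_fract_poly: map_poly_comm_ring_hom "const_fract :: 'a::field \<Rightarrow> 'a poly fract" ..

interpretation to_fract: comm_ring_hom "to_fract :: 'a::idom \<Rightarrow> 'a fract"
  by unfold_locales simp_all

definition q_fract :: "'a::field poly fract" where "q_fract = to_fract [:0, 1:]"

definition z_fract :: "'a::field poly fract" where "z_fract = (1 + q_fract^2) / q_fract"

lemma q_fract_nonzero: "q_fract \<noteq> 0"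
  by (simp add: q_fract_def)

lemma q_fract_z_fract: "q_fract * z_fract = 1 + q_fract^2"
  using q_fract_nonzero by (simp add: z_fract_def)

lemma to_fract_as_poly: "to_fract p = poly (map_poly const_fract p) q_fract"
proof (induction p)
  case (pCons a p)
  have "pCons a p = [:a:] + [:0, 1:] * p" by simp
  then have "to_fract (pCons a p) = const_fract a + q_fract * to_fract p"
    by (simp only: to_fract_add to_fract_mult const_fract_def q_fract_def)
  then show ?case using pCons.IH by (simp add: const_fract.map_poly_pCons_hom)
qed simp

lemma map_poly_const_fract_of_int: "map_poly const_fract (of_int_poly f) = (of_int_poly f :: 'a::field poly fract poly)"
  by (simp add: map_poly_map_poly comp_def const_fract.hom_of_int)

lemma to_fract_of_int_poly: "to_fract (of_int_poly f :: 'a::field poly) = poly (of_int_poly f) q_fract"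
  unfolding to_fract_as_poly map_poly_const_fract_of_int ..

lemma homogenise:
  fixes r :: "'a::field poly"
  assumes "degree r \<le> d"
  shows "\<exists>s. to_fract s = q_fract^d * poly (map_poly const_fract r) z_fract"
  using assms
proof (induction r arbitrary: d)
  case 0
  show ?case by (intro exI[of _ 0]) simp
next
  case (pCons a r)
  show ?case
  proof (cases "r = 0")
    case True
    have "to_fract ([:a:] * [:0, 1:]^d) = q_fract^d * poly (map_poly const_fract (pCons a r)) z_fract"
      unfolding to_fract.hom_mult to_fract.hom_power q_fract_def[symmetric] const_fract_def[symmetric]
      using True by (simp add: const_fract.map_poly_pCons_hom mult.commute)
    then show ?thesis by blast
  next
    case False
    then obtain d' where d: "d = Suc d'" "degree r \<le> d'"
      using pCons.prems by (cases d) auto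
    obtain s' where s': "to_fract s' = q_fract^d' * poly (map_poly const_fract r) z_fract"
      using pCons.IH[OF d(2)] by blast
    have "to_fract ([:a:] * [:0, 1:]^d + (1 + [:0, 1:]^2) * s')
            = const_fract a * q_fract^d + (q_fract * z_fract) * (q_fract^d' * poly (map_poly const_fract r) z_fract)"
      unfolding to_fract.hom_add to_fract.hom_mult to_fract.hom_power to_fract.hom_one
        q_fract_def[symmetric] const_fract_def[symmetric] q_fract_z_fract s' ..
    also have "\<dots> = q_fract^d * poly (map_poly const_fract (pCons a r)) z_fract"
      by (simp add: const_fract.map_poly_pCons_hom d(1) algebra_simps)
    finally show ?thesis by blast
  qed
qed

lemma Ppoly_psmall_fract:
  "to_fract (of_int_poly (Ppoly (Suc n)) :: 'a::field poly)
     = q_fract^(2*n+2) * poly (of_int_poly (psmall n)) z_fract"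
  unfolding to_fract_of_int_poly Ppoly_psmall_eval[OF q_fract_nonzero] z_fract_def ..

lemma degree_psmall: "degree (psmall n) \<le> 2*n+2"
proof (induction n rule: psmall.induct)
  case 1
  show ?case by simp
next
  case 2
  have "degree ([:5, -3, -2, 1:] * [:1, 1:] :: int poly) \<le> 3 + 1"
    by (rule order.trans[OF degree_mult_le]) simp
  then show ?case by simp
next
  case (3 n)
  have "degree ([:-2, 0, 1:] * psmall (Suc n)) \<le> 2 + (2*Suc n + 2)"
    by (rule order.trans[OF degree_mult_le]) (use 3(1) in simp)
  moreover have "degree (psmall n) \<le> 2 * Suc (Suc n) + 2" using 3(2) by simp
  ultimately show ?case by (simp only: psmall.simps(3)) (intro degree_diff_le, simp_all)
qed

text \<open>Writing p_{k-1} = (x - a)^5 r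
  and homogenising r, the substitution turns (x - a)^5 into (q^2 - aq + 1)^5, a factor of
  P_{k-1} of positive degree.\<close>

lemma psmall_no_fifth_power_linear_factor:
  fixes a :: "'a::field"
  assumes char: "of_nat (4*k+2) = (0::'a)" "(24::'a) \<noteq> 0" and k: "k \<ge> 3"
  shows "\<not> [:-a, 1:]^5 dvd (of_int_poly (psmall (k-1)) :: 'a poly)"
proof
  assume "[:-a, 1:]^5 dvd (of_int_poly (psmall (k-1)) :: 'a poly)"
  then obtain r where r: "(of_int_poly (psmall (k-1)) :: 'a poly) = [:-a, 1:]^5 * r"
    by blast
  define ev where "ev f = poly (map_poly const_fract f) z_fract" for f :: "'a poly"
  have "degree (of_int_poly (psmall (k-1)) :: 'a poly) \<le> 2*k"
    using degree_psmall[of "k-1"] k by (intro order.trans[OF degree_map_poly_le]) simp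
  then have "degree r \<le> 2*k - 5"
    unfolding r by (cases "r = 0") (simp_all add: degree_mult_eq degree_power_eq)
  then obtain s where s: "to_fract s = q_fract^(2*k-5) * ev r"
    using homogenise unfolding ev_def by blast
  have factor: "q_fract * ev [:-a, 1:] = to_fract [:1, -a, 1:]"
    using q_fract_z_fract
    by (simp add: ev_def to_fract_as_poly const_fract.map_poly_pCons_hom algebra_simps
        power2_eq_square)
  have "to_fract (of_int_poly (Ppoly k) :: 'a poly)
          = q_fract^(2*k) * ev (of_int_poly (psmall (k-1)))"
  proof -
    have "Suc (k-1) = k" "2*(k-1)+2 = 2*k" using k by simp_all
    then show ?thesis
      using Ppoly_psmall_fract[of "k-1", where 'a='a] by (simp add: ev_def map_poly_const_fract_of_int)
  qed
  also have "\<dots> = (q_fract * ev [:-a, 1:])^5 * (q_fract^(2*k-5) * ev r)"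
  proof -
    have split_power: "q_fract^(2*k) = q_fract^5 * q_fract^(2*k-5)"
      using k by (simp flip: power_add)
    have ev_product: "ev ([:-a, 1:]^5 * r) = ev [:-a, 1:]^5 * ev r"
      by (simp add: ev_def const_fract_poly.hom_mult const_fract_poly.hom_power)
    show ?thesis unfolding r split_power ev_product by (simp only: power_mult_distrib mult_ac)
  qed
  also have "\<dots> = to_fract ([:1, -a, 1:]^5 * s)"
    unfolding factor s[symmetric] by (simp add: to_fract.hom_mult to_fract.hom_power)
  finally have "[:1, -a, 1:]^5 dvd (of_int_poly (Ppoly k) :: 'a poly)"
    unfolding to_fract_eq_iff by simp
  then have "degree [:1, -a, 1:] = 0"
    by (rule Ppoly_no_fifth_power_factor[OF char])
  then show False by simp
qed

text \<open>p_n(-1) cycles through -1, 0, 1; hence x + 1 divides p_{k-1} exactly when k = 2 (mod 3).\<close>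

lemma psmall_at_minus_one:
  "poly (psmall n) (-1) = (if n mod 3 = 0 then -1 else if n mod 3 = 1 then 0 else 1)"
proof (induction n rule: psmall.induct)
  case (3 n)
  have recurrence: "poly (psmall (Suc (Suc n))) (-1) = - poly (psmall (Suc n)) (-1) - poly (psmall n) (-1)"
    by simp
  consider (zero) "n mod 3 = 0" | (one) "n mod 3 = 1" | (two) "n mod 3 = 2" by linarith
  then show ?case
  proof cases
    case zero
    then have "Suc n mod 3 = 1" "Suc (Suc n) mod 3 = 2" by presburger+
    then show ?thesis unfolding recurrence 3 using zero by simp
  next
    case one
    then have "Suc n mod 3 = 2" "Suc (Suc n) mod 3 = 0" by presburger+
    then show ?thesis unfolding recurrence 3 using one by simp
  next
    case two
    then have "Suc n mod 3 = 0" "Suc (Suc n) mod 3 = 1" by presburger+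
    then show ?thesis unfolding recurrence 3 using two by simp
  qed
qed simp_all

lemma msmall_dvd_psmall: "(of_int_poly (msmall k) :: 'a::comm_ring_1 poly) dvd of_int_poly (psmall (k-1))"
proof (cases "k mod 3 = 2")
  case True
  then have "k - 1 = 3 * (k div 3) + 1"
    using div_mult_mod_eq[of k 3] by linarith
  then have "poly (psmall (k-1)) (-1) = 0"
    by (simp only: psmall_at_minus_one) simp
  then have root: "[:1, 1:] dvd psmall (k-1)"
    using poly_eq_0_iff_dvd[of "psmall (k-1)" "-1"] by simp
  have "msmall k = psmall (k-1) div [:1, 1:]"
    using True unfolding msmall_def by (rule if_P)
  then have "psmall (k-1) = msmall k * [:1, 1:]"
    using dvd_div_mult_self[OF root] by simp
  then have "(of_int_poly (psmall (k-1)) :: 'a poly) = of_int_poly (msmall k) * of_int_poly [:1, 1:]"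
    by (simp only: of_int_poly_hom.hom_mult[symmetric])
  then show ?thesis by (simp only: dvd_triv_left)
qed (simp add: msmall_def)

lemma factorization_exponent_le:
  fixes n :: "'a::{field, finite} \<Rightarrow> nat"
  assumes "f = [:0, 1:] * (\<Prod>b\<in>{b. b \<noteq> 0}. [:-b, 1:] ^ n b)" and "f dvd g"
    and "\<not> [:-a, 1:] ^ Suc m dvd g" and "a \<noteq> 0"
  shows "n a \<le> m"
proof (rule ccontr)
  assume "\<not> n a \<le> m"
  then have "[:-a, 1:] ^ Suc m dvd [:-a, 1:] ^ n a"
    by (intro le_imp_power_dvd) simp
  also have "\<dots> dvd (\<Prod>b\<in>{b. b \<noteq> 0}. [:-b, 1:] ^ n b)"
    using assms(4) by (intro dvd_prodI) auto
  also have "\<dots> dvd g"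
    using assms(1,2) dvd_mult_right by blast
  finally show False using assms(3) by contradiction
qed

lemma char_conditions:
  assumes "CHAR('a::field) = p" "prime p" "p > 3" "p dvd 2*k+1"
  shows "of_nat (4*k+2) = (0::'a)" "(24::'a) \<noteq> 0"
proof -
  have "p dvd 2 * (2*k+1)" using assms(4) by (rule dvd_mult)
  then have "p dvd 4*k+2" by simp
  then show "of_nat (4*k+2) = (0::'a)"
    using assms(1) of_nat_eq_0_iff_char_dvd by blast
  have "\<not> p dvd 24"
  proof
    assume "p dvd 24"
    then have "p dvd 2^3 * 3" by simp
    then have "p dvd 2 \<or> p dvd 3"
      using assms(2) prime_dvd_mult_iff prime_dvd_power by metis
    then show False using assms(3) by (auto dest: dvd_imp_le)
  qed
  then have "of_nat 24 \<noteq> (0::'a)" using assms(1) of_nat_eq_0_iff_char_dvd by metis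
  then show "(24::'a) \<noteq> 0" by simp
qed

theorem mainTheorem12:
  fixes k p :: nat
  assumes "k \<ge> 3" and "prime p" and "p > 3" and "p dvd 2*k+1"
  shows "(\<forall>(x::'a::alg_closed_field). CHAR('a) = p \<longrightarrow>
            Polynomial.order x (map_poly of_int (Qpoly k)) \<le> 4 \<and>
            Polynomial.order x (map_poly of_int (Ppoly k)) \<le> 4)
       \<and> (CARD('p::prime_card) = p \<longrightarrow>
            (\<forall>a::'p mod_ring. \<not> [:-a, 1:]^5 dvd map_poly of_int (psmall (k-1)))
          \<and> (\<forall>n :: 'p mod_ring \<Rightarrow> nat.
               map_poly of_int (msmall k) = [:0, 1:] * (\<Prod>a\<in>{a. a \<noteq> 0}. [:-a, 1:] ^ n a)
               \<longrightarrow> (\<forall>a. a \<noteq> 0 \<longrightarrow> n a \<le> 4)))"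
proof (intro conjI allI impI)
  fix x :: "'a::alg_closed_field"
  assume "CHAR('a) = p"
  note char = char_conditions[OF this assms(2-4)]
  show "Polynomial.order x (map_poly of_int (Qpoly k)) \<le> 4"
    and "Polynomial.order x (map_poly of_int (Ppoly k)) \<le> 4"
    using root_multiplicities_le_4[OF char] by blast+
next
  assume "CARD('p::prime_card) = p"
  then have "CHAR('p mod_ring) = p" by simp
  note char = char_conditions[OF this assms(2-4)]
  show no_factor: "\<not> [:-a, 1:]^5 dvd map_poly of_int (psmall (k-1))" for a :: "'p mod_ring"
    by (rule psmall_no_fifth_power_linear_factor[OF char assms(1)])
  fix n :: "'p mod_ring \<Rightarrow> nat" and a :: "'p mod_ring"
  assume factorization: "map_poly of_int (msmall k) = [:0, 1:] * (\<Prod>a\<in>{a. a \<noteq> 0}. [:-a, 1:] ^ n a)"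
    and "a \<noteq> 0"
  have "\<not> [:-a, 1:] ^ Suc 4 dvd map_poly of_int (psmall (k-1))"
    using no_factor[of a] by simp
  then show "n a \<le> 4"
    by (rule factorization_exponent_le[OF factorization msmall_dvd_psmall _ \<open>a \<noteq> 0\<close>])
qed

end
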